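(* Let $G=K_{r_1,\dots,r_k}$ be a complete multipartite graph with $|V(G)|=r_1+\cdots+r_k$ even. Then $G$ has a good bisection.
   Context: A bisection of a graph $G$ is a bipartite spanning subgraph $H$ of $G$ with a bipartition into two partition sets (every edge of $H$ joining the two sets) whose sizes differ by at most one. A bisection $H$ of $G$ is good if $2d_H(v)\ge d_G(v)-1$ for every $v\in V(G)$. *)

theory Defs
  imports Main
begin

text \<open>A (simple) graph is given by a finite vertex set V and a symmetric, irreflexive
adjacency relation E; only edges between vertices of V are relevant.\<close>

definition degree :: "'a set \<Rightarrow> ('a \<Rightarrow> 'a \<Rightarrow> bool) \<Rightarrow> 'a \<Rightarrow> nat" where
  "degree V E v = card {u \<in> V. E v u}"

definition is_bisection :: "'a set \<Rightarrow> ('a \<Rightarrow> 'a \<Rightarrow> bool) \<Rightarrow> ('a \<Rightarrow> 'a \<Rightarrow> bool) \<Rightarrow> bool" where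
  "is_bisection V E H \<longleftrightarrow>
     (\<forall>u v. H u v \<longrightarrow> u \<in> V \<and> v \<in> V \<and> E u v) \<and>
     (\<forall>u v. H u v \<longleftrightarrow> H v u) \<and>
     (\<exists>A B. A \<union> B = V \<and> A \<inter> B = {} \<and> card A \<le> card B + 1 \<and> card B \<le> card A + 1 \<and>
        (\<forall>u v. H u v \<longrightarrow> (u \<in> A \<and> v \<in> B) \<or> (u \<in> B \<and> v \<in> A)))"

definition good_bisection :: "'a set \<Rightarrow> ('a \<Rightarrow> 'a \<Rightarrow> bool) \<Rightarrow> ('a \<Rightarrow> 'a \<Rightarrow> bool) \<Rightarrow> bool" where
  "good_bisection V E H \<longleftrightarrow> is_bisection V E H \<and>
     (\<forall>v \<in> V. 2 * int (degree V H v) \<ge> int (degree V E v) - 1)"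

text \<open>The complete multipartite graph K_{r_1,...,r_k} for rs = [r_1,...,r_k]:
vertices are pairs (i,j) with i < k and j < r_i (part i has r_i vertices);
two vertices are adjacent iff they lie in different parts.\<close>

definition cmp_vertices :: "nat list \<Rightarrow> (nat \<times> nat) set" where
  "cmp_vertices rs = {(i, j). i < length rs \<and> j < rs ! i}"

definition cmp_adj :: "nat \<times> nat \<Rightarrow> nat \<times> nat \<Rightarrow> bool" where
  "cmp_adj u v \<longleftrightarrow> fst u \<noteq> fst v"

end

theory Submission
  imports Defs
begin

text \<open>Number the vertices 0, ..., n - 1 part after part, so that every part becomes an interval,
and split them by the parity of their number. Both classes have n/2 vertices, and a part of
size r meets each class in at most (r + 1) div 2 vertices. Keeping exactly the edges between the
classes, a vertex of a part of size r has degree n - r in the graph and at least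
n/2 - (r + 1) div 2 in the bisection, and 2 (n/2 - (r + 1) div 2) \<ge> n - r - 1.\<close>

lemma card_parity_atLeastLessThan:
  "card {k \<in> {a..<a + r}. even k = e} = (if even a = e then (r + 1) div 2 else r div 2)"
proof (induction r)
  case 0
  then show ?case by simp
next
  case (Suc r)
  have split: "{k \<in> {a..<a + Suc r}. even k = e} =
        {k \<in> {a..<a + r}. even k = e} \<union> {k \<in> {a + r}. even k = e}"
    by auto
  have last: "{k \<in> {a + r}. even k = e} = (if even (a + r) = e then {a + r} else {})"
    by auto
  show ?case
    unfolding split last using Suc by (subst card_Un_disjoint) auto
qed

definition crossing_subgraph :: "'a set \<Rightarrow> 'a set \<Rightarrow> ('a \<Rightarrow> 'a \<Rightarrow> bool) \<Rightarrow> 'a \<Rightarrow> 'a \<Rightarrow> bool" where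
  "crossing_subgraph A B E u v \<longleftrightarrow> E u v \<and> (u \<in> A \<and> v \<in> B \<or> u \<in> B \<and> v \<in> A)"

lemma crossing_subgraph_commute: "crossing_subgraph B A E = crossing_subgraph A B E"
  unfolding crossing_subgraph_def by blast

lemma is_bisection_crossing_subgraph:
  assumes "A \<union> B = V" "A \<inter> B = {}" "card A \<le> card B + 1" "card B \<le> card A + 1"
    and "\<And>u v. E u v \<Longrightarrow> E v u"
  shows "is_bisection V E (crossing_subgraph A B E)"
  unfolding is_bisection_def crossing_subgraph_def using assms by blast

lemma degree_crossing_subgraph:
  assumes "A \<union> B = V" "A \<inter> B = {}" "v \<in> A"
  shows "degree V (crossing_subgraph A B E) v = card {u \<in> B. E v u}"
proof -
  have "{u \<in> V. crossing_subgraph A B E v u} = {u \<in> B. E v u}"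
    using assms unfolding crossing_subgraph_def by blast
  then show ?thesis
    unfolding degree_def by simp
qed

definition cmp_offset :: "nat list \<Rightarrow> nat \<Rightarrow> nat" where
  "cmp_offset rs i = (\<Sum>l<i. rs ! l)"

definition cmp_index :: "nat list \<Rightarrow> nat \<times> nat \<Rightarrow> nat" where
  "cmp_index rs v = cmp_offset rs (fst v) + snd v"

definition cmp_part :: "nat list \<Rightarrow> nat \<Rightarrow> (nat \<times> nat) set" where
  "cmp_part rs i = {i} \<times> {..<rs ! i}"

lemma cmp_offset_Suc: "cmp_offset rs (Suc i) = cmp_offset rs i + rs ! i"
  by (simp add: cmp_offset_def)

lemma cmp_offset_mono: "i \<le> i' \<Longrightarrow> cmp_offset rs i \<le> cmp_offset rs i'"
  unfolding cmp_offset_def by (rule sum_mono2) auto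

lemma cmp_offset_length: "cmp_offset rs (length rs) = sum_list rs"
  by (simp add: cmp_offset_def sum_list_sum_nth atLeast0LessThan)

lemma cmp_vertices_eq_UN_parts: "cmp_vertices rs = (\<Union>i<length rs. cmp_part rs i)"
  unfolding cmp_vertices_def cmp_part_def by auto

lemma finite_cmp_vertices: "finite (cmp_vertices rs)"
  unfolding cmp_vertices_eq_UN_parts cmp_part_def by auto

lemma card_cmp_vertices: "card (cmp_vertices rs) = sum_list rs"
proof -
  have "card (cmp_vertices rs) = (\<Sum>i<length rs. card (cmp_part rs i))"
    unfolding cmp_vertices_eq_UN_parts by (rule card_UN_disjoint) (auto simp: cmp_part_def)
  also have "\<dots> = sum_list rs"
    by (simp add: cmp_part_def sum_list_sum_nth atLeast0LessThan)
  finally show ?thesis .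
qed

lemma cmp_part_subset: "i < length rs \<Longrightarrow> cmp_part rs i \<subseteq> cmp_vertices rs"
  unfolding cmp_vertices_def cmp_part_def by auto

lemma cmp_index_less_offset_Suc:
  "v \<in> cmp_vertices rs \<Longrightarrow> cmp_index rs v < cmp_offset rs (Suc (fst v))"
  unfolding cmp_vertices_def cmp_index_def cmp_offset_Suc by auto

lemma inj_on_cmp_index: "inj_on (cmp_index rs) (cmp_vertices rs)"
proof (rule inj_onI)
  have same_part: "\<not> fst u < fst v"
    if "u \<in> cmp_vertices rs" "v \<in> cmp_vertices rs" "cmp_index rs u = cmp_index rs v" for u v
  proof
    assume "fst u < fst v"
    then have "cmp_offset rs (Suc (fst u)) \<le> cmp_offset rs (fst v)"
      by (intro cmp_offset_mono) simp
    with that cmp_index_less_offset_Suc[of u rs] show False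
      unfolding cmp_index_def by simp
  qed
  fix u v
  assume "u \<in> cmp_vertices rs" "v \<in> cmp_vertices rs" "cmp_index rs u = cmp_index rs v"
  with same_part[of u v] same_part[of v u] show "u = v"
    unfolding cmp_index_def by (simp add: prod_eq_iff)
qed

lemma bij_betw_cmp_index: "bij_betw (cmp_index rs) (cmp_vertices rs) {..<sum_list rs}"
proof -
  have "cmp_index rs ` cmp_vertices rs \<subseteq> {..<sum_list rs}"
  proof
    fix k assume "k \<in> cmp_index rs ` cmp_vertices rs"
    then obtain v where v: "v \<in> cmp_vertices rs" "k = cmp_index rs v" by blast
    then have "Suc (fst v) \<le> length rs"
      unfolding cmp_vertices_def by auto
    then have "cmp_offset rs (Suc (fst v)) \<le> sum_list rs"
      using cmp_offset_mono cmp_offset_length by metis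
    with v cmp_index_less_offset_Suc show "k \<in> {..<sum_list rs}" by fastforce
  qed
  moreover have "card (cmp_index rs ` cmp_vertices rs) = card {..<sum_list rs}"
    by (simp add: card_image inj_on_cmp_index card_cmp_vertices)
  ultimately have "cmp_index rs ` cmp_vertices rs = {..<sum_list rs}"
    by (intro card_subset_eq) auto
  with inj_on_cmp_index show ?thesis
    unfolding bij_betw_def by blast
qed

lemma cmp_index_image_part:
  "cmp_index rs ` cmp_part rs i = {cmp_offset rs i..<cmp_offset rs i + rs ! i}"
proof -
  have "cmp_index rs ` cmp_part rs i = (+) (cmp_offset rs i) ` {..<rs ! i}"
    unfolding cmp_part_def cmp_index_def by force
  then show ?thesis
    by (simp add: lessThan_atLeast0 add.commute)
qed

lemma degree_cmp_adj:
  assumes "v \<in> cmp_vertices rs"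
  shows "degree (cmp_vertices rs) cmp_adj v = sum_list rs - rs ! fst v"
proof -
  have i: "fst v < length rs"
    using assms unfolding cmp_vertices_def by auto
  have "{u \<in> cmp_vertices rs. cmp_adj v u} = cmp_vertices rs - cmp_part rs (fst v)"
    unfolding cmp_adj_def cmp_part_def cmp_vertices_def by auto
  then show ?thesis
    unfolding degree_def using cmp_part_subset[OF i]
    by (simp add: card_Diff_subset card_cmp_vertices cmp_part_def)
qed

definition cmp_parity_class :: "nat list \<Rightarrow> bool \<Rightarrow> (nat \<times> nat) set" where
  "cmp_parity_class rs e = {v \<in> cmp_vertices rs. even (cmp_index rs v) = e}"

lemma card_cmp_index_image:
  "X \<subseteq> cmp_vertices rs \<Longrightarrow> card (cmp_index rs ` X) = card X"
  by (rule card_image, rule inj_on_subset[OF inj_on_cmp_index])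

lemma card_cmp_parity_class:
  assumes "even (sum_list rs)"
  shows "card (cmp_parity_class rs e) = sum_list rs div 2"
proof -
  have "card (cmp_parity_class rs e) = card (cmp_index rs ` cmp_parity_class rs e)"
    by (simp add: card_cmp_index_image cmp_parity_class_def)
  also have "cmp_index rs ` cmp_parity_class rs e = {k \<in> cmp_index rs ` cmp_vertices rs. even k = e}"
    unfolding cmp_parity_class_def by blast
  also have "\<dots> = {k \<in> {0..<0 + sum_list rs}. even k = e}"
    by (simp add: bij_betw_imp_surj_on[OF bij_betw_cmp_index] lessThan_atLeast0)
  also have "card \<dots> = sum_list rs div 2"
    unfolding card_parity_atLeastLessThan using assms by simp
  finally show ?thesis .
qed

lemma card_cmp_parity_class_Int_part:
  assumes "i < length rs"
  shows "2 * card (cmp_parity_class rs e \<inter> cmp_part rs i) \<le> rs ! i + 1"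
proof -
  let ?a = "cmp_offset rs i"
  have "card (cmp_parity_class rs e \<inter> cmp_part rs i) =
        card (cmp_index rs ` (cmp_parity_class rs e \<inter> cmp_part rs i))"
    by (rule card_cmp_index_image[symmetric]) (auto simp: cmp_parity_class_def)
  also have "cmp_index rs ` (cmp_parity_class rs e \<inter> cmp_part rs i) =
             {k \<in> cmp_index rs ` cmp_part rs i. even k = e}"
    using cmp_part_subset[OF assms] unfolding cmp_parity_class_def by blast
  also have "\<dots> = {k \<in> {?a..<?a + rs ! i}. even k = e}"
    by (simp add: cmp_index_image_part)
  also have "card \<dots> \<le> (rs ! i + 1) div 2"
    unfolding card_parity_atLeastLessThan by simp
  finally show ?thesis by simp
qed

lemma degree_cmp_adj_le_crossing_parity:
  assumes "even (sum_list rs)" and v: "v \<in> cmp_vertices rs"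
  shows "degree (cmp_vertices rs) cmp_adj v \<le>
    2 * degree (cmp_vertices rs)
      (crossing_subgraph (cmp_parity_class rs True) (cmp_parity_class rs False) cmp_adj) v + 1"
proof -
  define e where "e = even (cmp_index rs v)"
  define A where "A = cmp_parity_class rs e"
  define B where "B = cmp_parity_class rs (\<not> e)"
  define P where "P = cmp_part rs (fst v)"
  have i: "fst v < length rs"
    using v unfolding cmp_vertices_def by auto
  have AB: "A \<union> B = cmp_vertices rs" "A \<inter> B = {}" "v \<in> A"
    using v unfolding A_def B_def e_def cmp_parity_class_def by auto
  have H: "crossing_subgraph (cmp_parity_class rs True) (cmp_parity_class rs False) cmp_adj =
           crossing_subgraph A B cmp_adj"
    unfolding A_def B_def by (cases e) (simp_all add: crossing_subgraph_commute)
  have "{u \<in> B. cmp_adj v u} = B - P"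
    unfolding B_def P_def cmp_adj_def cmp_parity_class_def cmp_part_def cmp_vertices_def by auto
  moreover have "finite B"
    using finite_cmp_vertices by (simp add: B_def cmp_parity_class_def)
  ultimately have deg_H: "degree (cmp_vertices rs) (crossing_subgraph A B cmp_adj) v = card B - card (B \<inter> P)"
    by (simp add: degree_crossing_subgraph[OF AB] card_Diff_subset_Int P_def cmp_part_def)
  have "card (B \<inter> P) \<le> card B"
    using \<open>finite B\<close> by (intro card_mono) auto
  moreover have "2 * card (B \<inter> P) \<le> rs ! fst v + 1"
    unfolding B_def P_def using card_cmp_parity_class_Int_part[OF i] .
  moreover have "2 * card B = sum_list rs"
    unfolding B_def using card_cmp_parity_class[OF assms(1)] assms(1) by simp
  ultimately have "sum_list rs - rs ! fst v \<le> 2 * (card B - card (B \<inter> P)) + 1"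
    by linarith
  then show ?thesis
    using deg_H degree_cmp_adj[OF v] by (simp add: H)
qed

theorem mainTheorem5:
  fixes rs :: "nat list"
  assumes "even (sum_list rs)"
  shows "\<exists>H. good_bisection (cmp_vertices rs) cmp_adj H"
proof -
  let ?H = "crossing_subgraph (cmp_parity_class rs True) (cmp_parity_class rs False) cmp_adj"
  have "is_bisection (cmp_vertices rs) cmp_adj ?H"
    by (rule is_bisection_crossing_subgraph, simp_all only: card_cmp_parity_class[OF assms])
      (auto simp: cmp_parity_class_def cmp_adj_def)
  moreover have "int (degree (cmp_vertices rs) cmp_adj v) - 1 \<le> 2 * int (degree (cmp_vertices rs) ?H v)"
    if "v \<in> cmp_vertices rs" for v
    using degree_cmp_adj_le_crossing_parity[OF assms that] by linarith
  ultimately show ?thesis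
    unfolding good_bisection_def by blast
qed

end
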